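(* Let $G$ be a graph with vertex set $V(G)=\{u_1,\ldots,u_n\}$ and let $H_1,\ldots,H_n$ be pairwise disjoint graphs such that at least one of the $H_i$ is not a complete graph. Let $M=\max\Big\{\sum_{j=1}^k box(H_{i_j}) : \{u_{i_1},\ldots,u_{i_k}\}\text{ is a clique in } G \text{ and each } H_{i_j} \text{ is not a complete graph}\Big\}.$ Then $M\leq box(G[H_1,H_2,\ldots,H_n])\leq \sum_{i=1}^n box(H_i)$.
   Context: All graphs are simple, finite and undirected. For a graph $G$ with vertex set $\{u_1,\ldots,u_n\}$ and pairwise disjoint graphs $H_1,\ldots,H_n$, the $G$-generalized join $G[H_1,\ldots,H_n]$ is the graph obtained from $G$ by replacing each vertex $u_i$ by $H_i$ and joining every vertex of $H_i$ to every vertex of $H_j$ whenever $u_i$ is adjacent to $u_j$ in $G$ (no other edges between different $H_i$'s). An $\ell$-box is a Cartesian product of $\ell$ closed bounded real intervals; the boxicity $box(G)$ of a graph $G$ is the least positive integer $\ell$ such that $G$ is isomorphic to the intersection graph of a family of $\ell$-boxes. A clique in $G$ is a set of pairwise adjacent vertices (a single vertex is a clique). *)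

theory Defs
  imports Complex_Main
begin

definition simple_graph :: "'a set \<Rightarrow> ('a \<Rightarrow> 'a \<Rightarrow> bool) \<Rightarrow> bool" where
  "simple_graph V E \<longleftrightarrow> finite V \<and> (\<forall>x y. E x y \<longrightarrow> x \<in> V \<and> y \<in> V)
     \<and> (\<forall>x y. E x y \<longrightarrow> E y x) \<and> (\<forall>x. \<not> E x x)"

definition complete_graph :: "'a set \<Rightarrow> ('a \<Rightarrow> 'a \<Rightarrow> bool) \<Rightarrow> bool" where
  "complete_graph V E \<longleftrightarrow> (\<forall>x\<in>V. \<forall>y\<in>V. x \<noteq> y \<longrightarrow> E x y)"

definition is_clique :: "'a set \<Rightarrow> ('a \<Rightarrow> 'a \<Rightarrow> bool) \<Rightarrow> 'a set \<Rightarrow> bool" where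
  "is_clique V E C \<longleftrightarrow> C \<subseteq> V \<and> (\<forall>x\<in>C. \<forall>y\<in>C. x \<noteq> y \<longrightarrow> E x y)"

text \<open>An l-box is given by l closed bounded intervals [fst (b i), snd (b i)], i < l.
  Two boxes intersect iff in every coordinate the intervals intersect.\<close>
definition boxes_intersect :: "nat \<Rightarrow> (nat \<Rightarrow> real \<times> real) \<Rightarrow> (nat \<Rightarrow> real \<times> real) \<Rightarrow> bool" where
  "boxes_intersect l b c \<longleftrightarrow> (\<forall>i<l. max (fst (b i)) (fst (c i)) \<le> min (snd (b i)) (snd (c i)))"

definition box_representable :: "'a set \<Rightarrow> ('a \<Rightarrow> 'a \<Rightarrow> bool) \<Rightarrow> nat \<Rightarrow> bool" where
  "box_representable V E l \<longleftrightarrow> (\<exists>B :: 'a \<Rightarrow> nat \<Rightarrow> real \<times> real.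
      (\<forall>x\<in>V. \<forall>i<l. fst (B x i) \<le> snd (B x i)) \<and>
      (\<forall>x\<in>V. \<forall>y\<in>V. x \<noteq> y \<longrightarrow> (E x y \<longleftrightarrow> boxes_intersect l (B x) (B y))))"

definition boxicity :: "'a set \<Rightarrow> ('a \<Rightarrow> 'a \<Rightarrow> bool) \<Rightarrow> nat" where
  "boxicity V E = (LEAST l. 0 < l \<and> box_representable V E l)"

text \<open>G-generalized join: vertex u of G is replaced by a disjoint copy of H u;
  realised on the disjoint union Sigma VG VH.\<close>
definition gjoin_verts :: "'v set \<Rightarrow> ('v \<Rightarrow> 'a set) \<Rightarrow> ('v \<times> 'a) set" where
  "gjoin_verts VG VH = Sigma VG VH"

definition gjoin_adj :: "('v \<Rightarrow> 'v \<Rightarrow> bool) \<Rightarrow> ('v \<Rightarrow> 'a \<Rightarrow> 'a \<Rightarrow> bool)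
    \<Rightarrow> 'v \<times> 'a \<Rightarrow> 'v \<times> 'a \<Rightarrow> bool" where
  "gjoin_adj EG EH p q \<longleftrightarrow> (fst p = fst q \<and> EH (fst p) (snd p) (snd q)) \<or> EG (fst p) (fst q)"

end

theory Submission
  imports Defs
begin

text \<open>Upper bound: take box representations of the \<open>H\<^sub>u\<close> with disjoint coordinate
  sets and use all of them. In a coordinate belonging to \<open>H\<^sub>u\<close>, the vertices of \<open>H\<^sub>u\<close>
  keep their intervals (squeezed into \<open>(-2, 2)\<close>), the vertices of copies adjacent to \<open>u\<close>
  in \<open>G\<close> get \<open>[-2, 2]\<close>, and all others the point \<open>2\<close>.

  Lower bound: in a box representation of the join, call a coordinate separating for \<open>H\<^sub>u\<close>
  if two vertices of \<open>H\<^sub>u\<close> have disjoint intervals there. The separating coordinates alone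
  still represent \<open>H\<^sub>u\<close>, and there is one if \<open>H\<^sub>u\<close> is not complete, so there are at
  least \<open>box(H\<^sub>u)\<close> of them. If \<open>u\<close> and \<open>v\<close> are adjacent in \<open>G\<close>, a common separating
  coordinate would give four intervals inducing a 4-cycle, which interval graphs do not
  contain; hence over a clique the separating sets are disjoint.\<close>

definition intervals_meet :: "real \<times> real \<Rightarrow> real \<times> real \<Rightarrow> bool" where
  "intervals_meet a b \<longleftrightarrow> max (fst a) (fst b) \<le> min (snd a) (snd b)"

definition box_rep_on :: "'a set \<Rightarrow> ('a \<Rightarrow> 'a \<Rightarrow> bool) \<Rightarrow> 'i set \<Rightarrow> ('a \<Rightarrow> 'i \<Rightarrow> real \<times> real) \<Rightarrow> bool" where
  "box_rep_on V E I B \<longleftrightarrow> (\<forall>x\<in>V. \<forall>i\<in>I. fst (B x i) \<le> snd (B x i)) \<and>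
     (\<forall>x\<in>V. \<forall>y\<in>V. x \<noteq> y \<longrightarrow> (E x y \<longleftrightarrow> (\<forall>i\<in>I. intervals_meet (B x i) (B y i))))"

lemma box_representable_iff_box_rep_on:
  "box_representable V E l \<longleftrightarrow> (\<exists>B. box_rep_on V E {..<l} B)"
  unfolding box_representable_def box_rep_on_def boxes_intersect_def intervals_meet_def
  by (simp only: Ball_def lessThan_iff)

lemma box_rep_on_reindex:
  assumes "box_rep_on V E I B" and "h ` J = I"
  shows "box_rep_on V E J (\<lambda>x j. B x (h j))"
  using assms unfolding box_rep_on_def by auto

lemma box_representable_card:
  assumes "finite I" and "box_rep_on V E I B"
  shows "box_representable V E (card I)"
proof -
  obtain h where "bij_betw h {0..<card I} I"
    using ex_bij_betw_nat_finite[OF assms(1)] by blast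
  then have "h ` {..<card I} = I"
    by (metis atLeast0LessThan bij_betw_imp_surj_on)
  then have "box_rep_on V E {..<card I} (\<lambda>x j. B x (h j))"
    by (rule box_rep_on_reindex[OF assms(2)])
  then show ?thesis
    unfolding box_representable_iff_box_rep_on by blast
qed

lemma box_representable_mono:
  assumes "box_representable V E l" and "l \<le> m"
  shows "box_representable V E m"
proof -
  obtain B where B: "box_rep_on V E {..<l} B"
    using assms(1) box_representable_iff_box_rep_on by blast
  have "box_rep_on V E {..<m} (\<lambda>x i. if i < l then B x i else (0, 0))"
    using B assms(2) unfolding box_rep_on_def intervals_meet_def by auto
  then show ?thesis
    using box_representable_iff_box_rep_on by blast
qed

lemma box_rep_on_adjacency_coordinates:
  assumes "symp E"
  shows "box_rep_on V E V (\<lambda>y x. if y = x then (0, 0) else if E x y then (0, 1) else (1, 1))"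
  using assms unfolding box_rep_on_def intervals_meet_def symp_def by auto

lemma box_representable_Suc_card:
  assumes "finite V" and "symp E"
  shows "box_representable V E (Suc (card V))"
  using box_representable_card[OF assms(1) box_rep_on_adjacency_coordinates[OF assms(2)]]
  by (rule box_representable_mono) simp

lemma boxicity_le:
  assumes "0 < l" and "box_representable V E l"
  shows "boxicity V E \<le> l"
  unfolding boxicity_def by (rule Least_le) (use assms in auto)

lemma boxicity_pos_representable:
  assumes "0 < l" and "box_representable V E l"
  shows "0 < boxicity V E \<and> box_representable V E (boxicity V E)"
  unfolding boxicity_def by (rule LeastI[of _ l]) (use assms in auto)

lemma simple_graph_boxicity_pos_representable:
  assumes "simple_graph V E"
  shows "0 < boxicity V E \<and> box_representable V E (boxicity V E)"
  using assms box_representable_Suc_card[of V E] boxicity_pos_representable[of "Suc (card V)"]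
  unfolding simple_graph_def symp_def by blast

lemma abs_arctan_less_2: "\<bar>arctan x\<bar> < 2"
  using arctan_bounded[of x] pi_less_4 by linarith

text \<open>\<open>arctan\<close> squeezes the boxes of \<open>H\<^sub>u\<close> into \<open>(-2, 2)\<close> without changing which of
  them intersect.\<close>
fun gjoin_boxes :: "('v \<Rightarrow> 'v \<Rightarrow> bool) \<Rightarrow> ('v \<Rightarrow> 'a \<Rightarrow> 'i \<Rightarrow> real \<times> real)
    \<Rightarrow> 'v \<times> 'a \<Rightarrow> 'v \<times> 'i \<Rightarrow> real \<times> real" where
  "gjoin_boxes EG R (u, x) (w, i) =
     (if w = u then map_prod arctan arctan (R u x i)
      else if EG u w then (-2, 2) else (2, 2))"

lemma gjoin_boxes_within:
  assumes "w = u \<Longrightarrow> fst (R u x i) \<le> snd (R u x i)"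
  shows "-2 \<le> fst (gjoin_boxes EG R (u, x) (w, i))"
    and "fst (gjoin_boxes EG R (u, x) (w, i)) \<le> snd (gjoin_boxes EG R (u, x) (w, i))"
    and "snd (gjoin_boxes EG R (u, x) (w, i)) \<le> 2"
  using assms abs_arctan_less_2[of "fst (R u x i)"] abs_arctan_less_2[of "snd (R u x i)"]
  by (auto simp: arctan_le_iff)

lemma gjoin_boxes_meet_same_fibre:
  "intervals_meet (gjoin_boxes EG R (u, x) (w, i)) (gjoin_boxes EG R (u, y) (w, i))
     \<longleftrightarrow> (w = u \<longrightarrow> intervals_meet (R u x i) (R u y i))"
  by (simp add: intervals_meet_def arctan_le_iff)

lemma gjoin_boxes_meet_adjacent_fibres:
  assumes "u \<noteq> v" "EG u v" "EG v u"
    and "w = u \<Longrightarrow> fst (R u x i) \<le> snd (R u x i)"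
    and "w = v \<Longrightarrow> fst (R v y i) \<le> snd (R v y i)"
  shows "intervals_meet (gjoin_boxes EG R (u, x) (w, i)) (gjoin_boxes EG R (v, y) (w, i))"
  using assms gjoin_boxes_within[of w u R x i EG] gjoin_boxes_within[of w v R y i EG]
  unfolding intervals_meet_def by (cases "w = u"; cases "w = v") simp_all

lemma gjoin_boxes_separate_nonadjacent_fibres:
  assumes "u \<noteq> v" "\<not> EG v u"
  shows "\<not> intervals_meet (gjoin_boxes EG R (u, x) (u, i)) (gjoin_boxes EG R (v, y) (u, i))"
  using assms abs_arctan_less_2[of "snd (R u x i)"] unfolding intervals_meet_def by auto

lemma gjoin_adj_iff_gjoin_boxes_meet:
  assumes sym: "symp EG" and irrefl: "irreflp EG"
    and R: "\<And>u. u \<in> VG \<Longrightarrow> box_rep_on (VH u) (EH u) (I u) (R u)"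
    and nonempty: "\<And>u. u \<in> VG \<Longrightarrow> I u \<noteq> {}"
    and xy: "u \<in> VG" "x \<in> VH u" "v \<in> VG" "y \<in> VH v" "(u, x) \<noteq> (v, y)"
  shows "gjoin_adj EG EH (u, x) (v, y) \<longleftrightarrow> (\<forall>(w, i)\<in>Sigma VG I. intervals_meet
      (gjoin_boxes EG R (u, x) (w, i)) (gjoin_boxes EG R (v, y) (w, i)))"
proof (cases "u = v")
  case True
  then have "gjoin_adj EG EH (u, x) (v, y) \<longleftrightarrow> EH u x y"
    using irrefl unfolding gjoin_adj_def irreflp_def by auto
  also have "\<dots> \<longleftrightarrow> (\<forall>i\<in>I u. intervals_meet (R u x i) (R u y i))"
    using R True xy unfolding box_rep_on_def by auto
  finally show ?thesis
    using True xy(1) by (auto simp only: gjoin_boxes_meet_same_fibre)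
next
  case False
  then have adj_iff: "gjoin_adj EG EH (u, x) (v, y) \<longleftrightarrow> EG u v"
    unfolding gjoin_adj_def by auto
  show ?thesis
  proof (cases "EG u v")
    case True
    then have "EG v u"
      using sym unfolding symp_def by blast
    have "intervals_meet (gjoin_boxes EG R (u, x) (w, i)) (gjoin_boxes EG R (v, y) (w, i))"
      if "w \<in> VG" "i \<in> I w" for w i
      by (rule gjoin_boxes_meet_adjacent_fibres)
        (use False True \<open>EG v u\<close> R xy that in \<open>auto simp: box_rep_on_def\<close>)
    then show ?thesis
      using adj_iff True by blast
  next
    case not_adj: False
    then have "\<not> EG v u"
      using sym unfolding symp_def by blast
    obtain i where "i \<in> I u"
      using nonempty xy(1) by blast
    then show ?thesis
      using gjoin_boxes_separate_nonadjacent_fibres[of u v EG R x i y, OF False \<open>\<not> EG v u\<close>]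
        adj_iff not_adj xy(1) by blast
  qed
qed

lemma gjoin_box_rep_on:
  assumes "symp EG" and "irreflp EG"
    and R: "\<And>u. u \<in> VG \<Longrightarrow> box_rep_on (VH u) (EH u) (I u) (R u)"
    and "\<And>u. u \<in> VG \<Longrightarrow> I u \<noteq> {}"
  shows "box_rep_on (gjoin_verts VG VH) (gjoin_adj EG EH) (Sigma VG I) (gjoin_boxes EG R)"
proof -
  have "fst (gjoin_boxes EG R (u, x) (w, i)) \<le> snd (gjoin_boxes EG R (u, x) (w, i))"
    if "u \<in> VG" "x \<in> VH u" "i \<in> I w" for u x w i
    using R[OF that(1)] that by (intro gjoin_boxes_within(2)) (simp add: box_rep_on_def)
  with gjoin_adj_iff_gjoin_boxes_meet[OF assms] show ?thesis
    unfolding box_rep_on_def gjoin_verts_def by (auto simp del: gjoin_boxes.simps)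
qed

lemma intervals_no_induced_C4:
  assumes "fst a1 \<le> snd a1" "fst a2 \<le> snd a2" "fst b1 \<le> snd b1" "fst b2 \<le> snd b2"
    and "\<not> intervals_meet a1 a2" "\<not> intervals_meet b1 b2"
    and "intervals_meet a1 b1" "intervals_meet a1 b2" "intervals_meet a2 b1" "intervals_meet a2 b2"
  shows False
  using assms unfolding intervals_meet_def by (auto simp: max_def min_def split: if_splits)

definition separating_coordinates :: "'a set \<Rightarrow> 'i set \<Rightarrow> ('a \<Rightarrow> 'i \<Rightarrow> real \<times> real) \<Rightarrow> 'i set" where
  "separating_coordinates V I B = {i \<in> I. \<exists>x\<in>V. \<exists>y\<in>V. \<not> intervals_meet (B x i) (B y i)}"

lemma box_rep_on_separating_coordinates:
  assumes "box_rep_on V E I B"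
  shows "box_rep_on V E (separating_coordinates V I B) B"
  using assms unfolding box_rep_on_def separating_coordinates_def by blast

lemma separating_coordinates_nonempty:
  assumes "box_rep_on V E I B" and "\<not> complete_graph V E"
  shows "separating_coordinates V I B \<noteq> {}"
  using assms unfolding box_rep_on_def separating_coordinates_def complete_graph_def by blast

lemma boxicity_le_card_separating_coordinates:
  assumes "finite I" and "box_rep_on V E I B" and "\<not> complete_graph V E"
  shows "boxicity V E \<le> card (separating_coordinates V I B)"
proof (rule boxicity_le)
  have "separating_coordinates V I B \<subseteq> I"
    unfolding separating_coordinates_def by blast
  then show "0 < card (separating_coordinates V I B)"
    using assms finite_subset separating_coordinates_nonempty by (metis card_gt_0_iff)
  show "box_representable V E (card (separating_coordinates V I B))"
    using \<open>separating_coordinates V I B \<subseteq> I\<close> assms(1,2) box_rep_on_separating_coordinates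
    by (metis box_representable_card finite_subset)
qed

lemma box_rep_on_gjoin_fibre:
  assumes "box_rep_on (gjoin_verts VG VH) (gjoin_adj EG EH) I B"
    and "u \<in> VG" and "\<not> EG u u"
  shows "box_rep_on (VH u) (EH u) I (\<lambda>x. B (u, x))"
proof -
  have "gjoin_adj EG EH (u, x) (u, y) \<longleftrightarrow> EH u x y" for x y
    using assms(3) unfolding gjoin_adj_def by simp
  then show ?thesis
    using assms(1,2) unfolding box_rep_on_def gjoin_verts_def by (metis SigmaI prod.inject)
qed

lemma gjoin_separating_coordinates_disjoint:
  assumes rep: "box_rep_on (gjoin_verts VG VH) (gjoin_adj EG EH) I B"
    and "u \<in> VG" "v \<in> VG" "u \<noteq> v" "EG u v"
  shows "separating_coordinates (VH u) I (\<lambda>x. B (u, x))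
     \<inter> separating_coordinates (VH v) I (\<lambda>y. B (v, y)) = {}"
proof (rule ccontr)
  assume "separating_coordinates (VH u) I (\<lambda>x. B (u, x))
     \<inter> separating_coordinates (VH v) I (\<lambda>y. B (v, y)) \<noteq> {}"
  then obtain i x1 x2 y1 y2 where i: "i \<in> I"
    and x: "x1 \<in> VH u" "x2 \<in> VH u" "\<not> intervals_meet (B (u, x1) i) (B (u, x2) i)"
    and y: "y1 \<in> VH v" "y2 \<in> VH v" "\<not> intervals_meet (B (v, y1) i) (B (v, y2) i)"
    unfolding separating_coordinates_def by blast
  have "intervals_meet (B (u, x) i) (B (v, y) i)" if "x \<in> VH u" "y \<in> VH v" for x y
  proof -
    have "gjoin_adj EG EH (u, x) (v, y)"
      using \<open>EG u v\<close> unfolding gjoin_adj_def by simp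
    then show ?thesis
      using rep that i assms(2-4) unfolding box_rep_on_def gjoin_verts_def by auto
  qed
  moreover have "fst (B p i) \<le> snd (B p i)" if "p \<in> gjoin_verts VG VH" for p
    using rep that i unfolding box_rep_on_def by blast
  ultimately show False
    using intervals_no_induced_C4[of "B (u, x1) i" "B (u, x2) i" "B (v, y1) i" "B (v, y2) i"]
      x y assms(2,3) unfolding gjoin_verts_def by auto
qed

lemma gjoin_clique_boxicity_sum_le:
  assumes rep: "box_rep_on (gjoin_verts VG VH) (gjoin_adj EG EH) I B" and "finite I"
    and "irreflp EG" and "finite C" and clique: "is_clique VG EG C"
    and not_complete: "\<forall>u\<in>C. \<not> complete_graph (VH u) (EH u)"
  shows "(\<Sum>u\<in>C. boxicity (VH u) (EH u)) \<le> card I"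
proof -
  define S where "S u = separating_coordinates (VH u) I (\<lambda>x. B (u, x))" for u
  have C: "C \<subseteq> VG" "\<And>u v. u \<in> C \<Longrightarrow> v \<in> C \<Longrightarrow> u \<noteq> v \<Longrightarrow> EG u v"
    using clique unfolding is_clique_def by auto
  have S_sub: "S u \<subseteq> I" for u
    unfolding S_def separating_coordinates_def by blast
  have "(\<Sum>u\<in>C. boxicity (VH u) (EH u)) \<le> (\<Sum>u\<in>C. card (S u))"
    using boxicity_le_card_separating_coordinates[OF \<open>finite I\<close> box_rep_on_gjoin_fibre[OF rep]]
      not_complete C(1) \<open>irreflp EG\<close> unfolding S_def irreflp_def by (intro sum_mono) blast
  also have "\<dots> = card (\<Union>u\<in>C. S u)"
  proof (rule card_UN_disjoint[symmetric])
    show "\<forall>u\<in>C. finite (S u)"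
      using S_sub \<open>finite I\<close> finite_subset by blast
    show "\<forall>u\<in>C. \<forall>v\<in>C. u \<noteq> v \<longrightarrow> S u \<inter> S v = {}"
      using gjoin_separating_coordinates_disjoint[OF rep] C unfolding S_def by blast
  qed (rule \<open>finite C\<close>)
  also have "\<dots> \<le> card I"
    using S_sub \<open>finite I\<close> by (intro card_mono) auto
  finally show ?thesis .
qed

lemma gjoin_box_representable_sum_boxicity:
  assumes G: "simple_graph VG EG" and H: "\<forall>u\<in>VG. simple_graph (VH u) (EH u)"
  shows "box_representable (gjoin_verts VG VH) (gjoin_adj EG EH) (\<Sum>u\<in>VG. boxicity (VH u) (EH u))"
proof -
  let ?I = "\<lambda>u. {..<boxicity (VH u) (EH u)}"
  have "\<forall>u\<in>VG. \<exists>R. box_rep_on (VH u) (EH u) (?I u) R"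
    using H simple_graph_boxicity_pos_representable box_representable_iff_box_rep_on by blast
  then obtain R where "\<And>u. u \<in> VG \<Longrightarrow> box_rep_on (VH u) (EH u) (?I u) (R u)"
    by metis
  moreover have "\<And>u. u \<in> VG \<Longrightarrow> ?I u \<noteq> {}"
    using H simple_graph_boxicity_pos_representable by fastforce
  ultimately have "box_rep_on (gjoin_verts VG VH) (gjoin_adj EG EH) (Sigma VG ?I) (gjoin_boxes EG R)"
    using G by (intro gjoin_box_rep_on) (auto simp: simple_graph_def symp_def irreflp_def)
  moreover have "finite VG"
    using G unfolding simple_graph_def by blast
  ultimately show ?thesis
    using box_representable_card[of "Sigma VG ?I"] by simp
qed

theorem theorem3p1:
  fixes VG :: "'v set" and EG :: "'v \<Rightarrow> 'v \<Rightarrow> bool"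
    and VH :: "'v \<Rightarrow> 'a set" and EH :: "'v \<Rightarrow> 'a \<Rightarrow> 'a \<Rightarrow> bool"
  assumes "simple_graph VG EG"
    and "\<forall>u\<in>VG. simple_graph (VH u) (EH u)"
    and "\<exists>u\<in>VG. \<not> complete_graph (VH u) (EH u)"
  shows "Max {(\<Sum>u\<in>C. boxicity (VH u) (EH u)) | C.
              is_clique VG EG C \<and> (\<forall>u\<in>C. \<not> complete_graph (VH u) (EH u))}
           \<le> boxicity (gjoin_verts VG VH) (gjoin_adj EG EH)
       \<and> boxicity (gjoin_verts VG VH) (gjoin_adj EG EH) \<le> (\<Sum>u\<in>VG. boxicity (VH u) (EH u))"
proof -
  let ?box = "boxicity (gjoin_verts VG VH) (gjoin_adj EG EH)"
  let ?sum = "\<lambda>C. \<Sum>u\<in>C. boxicity (VH u) (EH u)"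
  let ?M = "{?sum C | C. is_clique VG EG C \<and> (\<forall>u\<in>C. \<not> complete_graph (VH u) (EH u))}"
  have finite: "finite VG" and irrefl: "irreflp EG"
    using assms(1) unfolding simple_graph_def irreflp_def by auto
  have rep: "box_representable (gjoin_verts VG VH) (gjoin_adj EG EH) (?sum VG)"
    using gjoin_box_representable_sum_boxicity[OF assms(1,2)] .
  obtain u where "u \<in> VG"
    using assms(3) by blast
  then have "0 < ?sum VG"
    using assms(2) simple_graph_boxicity_pos_representable by (intro sum_pos2[OF finite]) auto
  then obtain B where B: "box_rep_on (gjoin_verts VG VH) (gjoin_adj EG EH) {..<?box} B"
    using boxicity_pos_representable[OF _ rep] box_representable_iff_box_rep_on by blast
  have "?sum C \<le> ?box"
    if clique: "is_clique VG EG C" "\<forall>u\<in>C. \<not> complete_graph (VH u) (EH u)" for C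
  proof -
    have "finite C"
      using clique(1) finite finite_subset unfolding is_clique_def by blast
    then show ?thesis
      using gjoin_clique_boxicity_sum_le[OF B _ irrefl _ clique] by simp
  qed
  moreover have "finite ?M"
    using finite unfolding is_clique_def by (auto intro: finite_subset[of _ "?sum ` Pow VG"])
  moreover have "?M \<noteq> {}"
    unfolding is_clique_def by blast
  ultimately have "Max ?M \<le> ?box"
    by (subst Max_le_iff) auto
  then show ?thesis
    using boxicity_le[OF \<open>0 < ?sum VG\<close> rep] by blast
qed

end
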